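(* Let $M,N$ be positive integers. For $m,n,i,j\in\{1,\dots,N\}$ and $k,\ell\in\{1,\dots,M\}$ define $$A_{k\ell ij}^{mn}=\int_0^1\sin(m\pi x)\sin(k\pi x)\cos(i\pi x)\,dx\int_0^1\sin(n\pi y)\cos(\ell \pi y)\sin(j\pi y)\,dy,$$ $$B_{k\ell ij}^{mn}=\int_0^1\sin(m\pi x)\cos(k\pi x)\sin(i\pi x)\,dx\int_0^1\sin(n\pi y)\sin(\ell \pi y)\cos(j\pi y)\,dy,$$ and $$\hat K_{ij}^{mn}=\max\Big\{i\Big(\sum_{k,\ell=1}^M(k^2+\ell^2)^{-1}(A_{k\ell ij}^{mn})^2\Big)^{1/2},\ j\Big(\sum_{k,\ell=1}^M(k^2+\ell^2)^{-1}(B_{k\ell ij}^{mn})^2\Big)^{1/2}\Big\}.$$ Let $\alpha_{k\ell},\beta_{k\ell}$ ($k,\ell=1,\dots,M$) be real numbers satisfying $\frac{\pi^2}{4}\sum_{k,\ell=1}^M(k^2+\ell^2)(\alpha_{k\ell}^2+\beta_{k\ell}^2)=1$, and set $$F_{ij}^{mn}=\sum_{k,\ell=1}^M iA_{k\ell ij}^{mn}\alpha_{k\ell},\qquad G_{ij}^{mn}=\sum_{k,\ell=1}^M jB_{k\ell ij}^{mn}\beta_{k\ell}.$$ Then for all $m,n,i,j\in\{1,\dots,N\}$, $$-2\sqrt{2}\hat K_{ij}^{mn}\le F_{ij}^{mn}+G_{ij}^{mn}\le 2\sqrt{2}\hat K_{ij}^{mn}.$$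
   Context: The quantities arise from a spectral Galerkin discretization of the advection-diffusion equation on $[0,1]^2$ with $\phi=\sum_{i,j}a_{ij}(t)\sin(i\pi x)\sin(j\pi y)$ and velocity $v_1=\sum_{k,\ell}\alpha_{k\ell}\sin(k\pi x)\cos(\ell\pi y)$, $v_2=\sum_{k,\ell}\beta_{k\ell}\cos(k\pi x)\sin(\ell\pi y)$; the normalization $\frac{\pi^2}{4}\sum(k^2+\ell^2)(\alpha_{k\ell}^2+\beta_{k\ell}^2)=1$ is the condition $\|\nabla\mathbf v\|_{L^2}^2=1$. *)

theory Defs
  imports "HOL-Analysis.Analysis"
begin

definition coefA :: "nat \<Rightarrow> nat \<Rightarrow> nat \<Rightarrow> nat \<Rightarrow> nat \<Rightarrow> nat \<Rightarrow> real" where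
  "coefA m n k l i j =
     integral {0..1} (\<lambda>x. sin (real m * pi * x) * sin (real k * pi * x) * cos (real i * pi * x)) *
     integral {0..1} (\<lambda>y. sin (real n * pi * y) * cos (real l * pi * y) * sin (real j * pi * y))"

definition coefB :: "nat \<Rightarrow> nat \<Rightarrow> nat \<Rightarrow> nat \<Rightarrow> nat \<Rightarrow> nat \<Rightarrow> real" where
  "coefB m n k l i j =
     integral {0..1} (\<lambda>x. sin (real m * pi * x) * cos (real k * pi * x) * sin (real i * pi * x)) *
     integral {0..1} (\<lambda>y. sin (real n * pi * y) * sin (real l * pi * y) * cos (real j * pi * y))"

definition Khat :: "nat \<Rightarrow> nat \<Rightarrow> nat \<Rightarrow> nat \<Rightarrow> nat \<Rightarrow> real" where
  "Khat M m n i j = max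
     (real i * sqrt (\<Sum>k=1..M. \<Sum>l=1..M. (coefA m n k l i j)\<^sup>2 / (real k ^ 2 + real l ^ 2)))
     (real j * sqrt (\<Sum>k=1..M. \<Sum>l=1..M. (coefB m n k l i j)\<^sup>2 / (real k ^ 2 + real l ^ 2)))"

end

theory Submission
  imports Defs
begin

text \<open>The integrals defining the coefficients play no role: the bound holds for arbitrary
  real coefficients. Writing \<open>a\<close> and \<open>b\<close> for the weighted energies
  \<open>\<Sum>(k\<^sup>2 + l\<^sup>2) \<alpha>\<^sub>k\<^sub>l\<^sup>2\<close> and \<open>\<Sum>(k\<^sup>2 + l\<^sup>2) \<beta>\<^sub>k\<^sub>l\<^sup>2\<close>, Cauchy--Schwarz with
  weights \<open>k\<^sup>2 + l\<^sup>2\<close> gives \<open>|F| \<le> K \<surd>a\<close> and \<open>|G| \<le> K \<surd>b\<close>, and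
  \<open>\<surd>a + \<surd>b \<le> \<surd>(2(a + b)) = 2\<surd>2 / \<pi>\<close> by the normalisation, which is even
  smaller than \<open>2\<surd>2\<close>.\<close>

lemma weighted_Cauchy_Schwarz_sum:
  fixes x c w :: "'a \<Rightarrow> real"
  assumes "\<And>p. p \<in> S \<Longrightarrow> w p > 0"
  shows "\<bar>\<Sum>p\<in>S. x p * c p\<bar> \<le> sqrt (\<Sum>p\<in>S. (x p)\<^sup>2 / w p) * sqrt (\<Sum>p\<in>S. w p * (c p)\<^sup>2)"
proof -
  have split: "(\<Sum>p\<in>S. x p * c p) = (\<Sum>p\<in>S. (x p / sqrt (w p)) * (sqrt (w p) * c p))"
    by (rule sum.cong) (use assms in \<open>auto simp: less_imp_neq[symmetric]\<close>)
  have left: "(\<Sum>p\<in>S. (x p / sqrt (w p))\<^sup>2) = (\<Sum>p\<in>S. (x p)\<^sup>2 / w p)"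
    by (rule sum.cong) (use assms in \<open>auto simp: power_divide less_imp_le\<close>)
  have right: "(\<Sum>p\<in>S. (sqrt (w p) * c p)\<^sup>2) = (\<Sum>p\<in>S. w p * (c p)\<^sup>2)"
    by (rule sum.cong) (use assms in \<open>auto simp: power_mult_distrib less_imp_le\<close>)
  have "(\<Sum>p\<in>S. x p * c p)\<^sup>2 \<le> (\<Sum>p\<in>S. (x p)\<^sup>2 / w p) * (\<Sum>p\<in>S. w p * (c p)\<^sup>2)"
    using Cauchy_Schwarz_ineq_sum[of "\<lambda>p. x p / sqrt (w p)" "\<lambda>p. sqrt (w p) * c p" S]
    unfolding split left right .
  then have "sqrt ((\<Sum>p\<in>S. x p * c p)\<^sup>2) \<le> sqrt ((\<Sum>p\<in>S. (x p)\<^sup>2 / w p) * (\<Sum>p\<in>S. w p * (c p)\<^sup>2))"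
    by (rule real_sqrt_le_mono)
  then show ?thesis
    by (simp add: real_sqrt_mult)
qed

lemma weighted_Cauchy_Schwarz_double_sum:
  fixes x c w :: "nat \<Rightarrow> nat \<Rightarrow> real"
  assumes "\<And>k l. k \<in> A \<Longrightarrow> l \<in> B \<Longrightarrow> w k l > 0"
  shows "\<bar>\<Sum>k\<in>A. \<Sum>l\<in>B. x k l * c k l\<bar> \<le>
    sqrt (\<Sum>k\<in>A. \<Sum>l\<in>B. (x k l)\<^sup>2 / w k l) * sqrt (\<Sum>k\<in>A. \<Sum>l\<in>B. w k l * (c k l)\<^sup>2)"
proof -
  have "\<bar>\<Sum>(k, l)\<in>A \<times> B. x k l * c k l\<bar> \<le>
    sqrt (\<Sum>(k, l)\<in>A \<times> B. (x k l)\<^sup>2 / w k l) * sqrt (\<Sum>(k, l)\<in>A \<times> B. w k l * (c k l)\<^sup>2)"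
    using weighted_Cauchy_Schwarz_sum[of "A \<times> B" "case_prod w" "case_prod x" "case_prod c"] assms
    by (simp add: split_def mem_Times_iff)
  then show ?thesis
    by (simp add: sum.cartesian_product)
qed

lemma sqrt_add_le_sqrt_double_sum:
  fixes a b :: real
  assumes "0 \<le> a" "0 \<le> b"
  shows "sqrt a + sqrt b \<le> sqrt (2 * (a + b))"
proof (rule real_le_rsqrt)
  have "(sqrt a + sqrt b)\<^sup>2 + (sqrt a - sqrt b)\<^sup>2 = 2 * (a + b)"
    using assms by (simp add: power2_sum power2_diff)
  then show "(sqrt a + sqrt b)\<^sup>2 \<le> 2 * (a + b)"
    using zero_le_power2[of "sqrt a - sqrt b"] by linarith
qed

lemma abs_add_le_max_mul_sqrt:
  fixes F G p q a b :: real
  assumes "\<bar>F\<bar> \<le> p * sqrt a" "\<bar>G\<bar> \<le> q * sqrt b"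
    and "0 \<le> p" "0 \<le> q" "0 \<le> a" "0 \<le> b"
  shows "\<bar>F + G\<bar> \<le> max p q * sqrt (2 * (a + b))"
proof -
  have "\<bar>F + G\<bar> \<le> p * sqrt a + q * sqrt b"
    using assms(1,2) by linarith
  also have "\<dots> \<le> max p q * sqrt a + max p q * sqrt b"
    by (intro add_mono mult_right_mono) (use assms in auto)
  also have "\<dots> = max p q * (sqrt a + sqrt b)"
    by (simp add: distrib_left)
  also have "\<dots> \<le> max p q * sqrt (2 * (a + b))"
    using sqrt_add_le_sqrt_double_sum[OF assms(5,6)] assms(3) by (simp add: mult_left_mono)
  finally show ?thesis .
qed

lemma abs_weighted_double_sum_le:
  fixes x c :: "nat \<Rightarrow> nat \<Rightarrow> real" and s :: nat
  shows "\<bar>\<Sum>k=1..M. \<Sum>l=1..M. real s * x k l * c k l\<bar> \<le>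
    real s * sqrt (\<Sum>k=1..M. \<Sum>l=1..M. (x k l)\<^sup>2 / (real k ^ 2 + real l ^ 2)) *
      sqrt (\<Sum>k=1..M. \<Sum>l=1..M. (real k ^ 2 + real l ^ 2) * (c k l)\<^sup>2)"
proof -
  have "(\<Sum>k=1..M. \<Sum>l=1..M. real s * x k l * c k l) = real s * (\<Sum>k=1..M. \<Sum>l=1..M. x k l * c k l)"
    by (simp add: sum_distrib_left mult.assoc)
  moreover have "\<bar>\<Sum>k=1..M. \<Sum>l=1..M. x k l * c k l\<bar> \<le>
      sqrt (\<Sum>k=1..M. \<Sum>l=1..M. (x k l)\<^sup>2 / (real k ^ 2 + real l ^ 2)) *
      sqrt (\<Sum>k=1..M. \<Sum>l=1..M. (real k ^ 2 + real l ^ 2) * (c k l)\<^sup>2)"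
    by (rule weighted_Cauchy_Schwarz_double_sum) (auto simp: add_pos_pos)
  ultimately show ?thesis
    by (simp add: abs_mult mult.assoc mult_left_mono)
qed

theorem mainTheorem2:
  fixes M N :: nat and \<alpha> \<beta> :: "nat \<Rightarrow> nat \<Rightarrow> real" and m n i j :: nat
  assumes "M \<ge> 1" and "N \<ge> 1"
    and norm: "pi\<^sup>2 / 4 * (\<Sum>k=1..M. \<Sum>l=1..M. (real k ^ 2 + real l ^ 2) * ((\<alpha> k l)\<^sup>2 + (\<beta> k l)\<^sup>2)) = 1"
    and "m \<in> {1..N}" and "n \<in> {1..N}" and "i \<in> {1..N}" and "j \<in> {1..N}"
  shows "- 2 * sqrt 2 * Khat M m n i j \<le>
           (\<Sum>k=1..M. \<Sum>l=1..M. real i * coefA m n k l i j * \<alpha> k l)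
         + (\<Sum>k=1..M. \<Sum>l=1..M. real j * coefB m n k l i j * \<beta> k l)
       \<and> (\<Sum>k=1..M. \<Sum>l=1..M. real i * coefA m n k l i j * \<alpha> k l)
         + (\<Sum>k=1..M. \<Sum>l=1..M. real j * coefB m n k l i j * \<beta> k l)
         \<le> 2 * sqrt 2 * Khat M m n i j"
proof -
  define a where "a = (\<Sum>k=1..M. \<Sum>l=1..M. (real k ^ 2 + real l ^ 2) * (\<alpha> k l)\<^sup>2)"
  define b where "b = (\<Sum>k=1..M. \<Sum>l=1..M. (real k ^ 2 + real l ^ 2) * (\<beta> k l)\<^sup>2)"
  have "a + b = 4 / pi\<^sup>2"
    using norm by (simp add: a_def b_def sum.distrib[symmetric] distrib_left field_simps)
  also have "\<dots> \<le> 4"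
    using pi_ge_two by (simp add: divide_le_eq one_le_power)
  finally have "a + b \<le> 4" .
  then have "sqrt (2 * (a + b)) \<le> sqrt (4 * 2)"
    by simp
  also have "\<dots> = 2 * sqrt 2"
    unfolding real_sqrt_mult by simp
  finally have energy: "sqrt (2 * (a + b)) \<le> 2 * sqrt 2" .
  have "0 \<le> Khat M m n i j"
    unfolding Khat_def by (simp add: le_max_iff_disj sum_nonneg)
  have "\<bar>(\<Sum>k=1..M. \<Sum>l=1..M. real i * coefA m n k l i j * \<alpha> k l)
         + (\<Sum>k=1..M. \<Sum>l=1..M. real j * coefB m n k l i j * \<beta> k l)\<bar>
      \<le> Khat M m n i j * sqrt (2 * (a + b))"
    unfolding Khat_def a_def b_def
    by (intro abs_add_le_max_mul_sqrt abs_weighted_double_sum_le sum_nonneg mult_nonneg_nonneg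
        real_sqrt_ge_zero divide_nonneg_nonneg) auto
  also have "\<dots> \<le> 2 * sqrt 2 * Khat M m n i j"
    using mult_left_mono[OF energy \<open>0 \<le> Khat M m n i j\<close>] by (simp only: mult.commute)
  finally show ?thesis
    by (simp add: abs_le_iff)
qed

end
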